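(* Let $d\ge2$, $0<\lambda<\frac12$, and let $X$ be a $d$-dimensional $(d+1)$-partite weighted simplicial complex. Suppose every link of $X$ (including $X$ itself) has a connected underlying graph, and for every $s\in X(d-2)$ the link $X_s$ (a bipartite graph between its two remaining colors) is a $\frac{\lambda}{(d-1)\lambda+1}$-bipartite expander. Then for every face $s\in X$ (including $s=\emptyset$) and every two distinct colors $i,j\notin\mathrm{col}(s)$, the bipartite graph between $X_s[i]$ and $X_s[j]$ is a $\lambda$-bipartite expander.
   Context: **Weighted complex and links.** $X(k)$ denotes the faces of size $k+1$, weighted by a distribution on $d$-faces (choose a $d$-face, then a uniform chain of subfaces). The link of $s$ is $X_s=\{u\setminus s:s\subseteq u\in X\}$ with conditional measure. **Partite complexes and colors.** $X$ is $(d+1)$-partite if $X(0)=V_0\sqcup\dots\sqcup V_d$ and each $d$-face has exactly one vertex in each $V_i$. $\mathrm{col}(s)=\{i:s\cap V_i\neq\emptyset\}$, and $X_s[i]$ is the set of color-$i$ vertices of the link $X_s$. **Bipartite expansion.** A weighted bipartite graph is a $\mu$-bipartite expander if $\sup\{\langle Bf,g\rangle:\|f\|=\|g\|=1,\ f\perp\text{constants}\}\le\mu$ for its averaging operator $B$. *)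

theory Defs
  imports "HOL-Analysis.Analysis"
begin

text \<open>The complex X is the downward closure of F.\<close>

definition wcomplex :: "nat \<Rightarrow> 'v set set \<Rightarrow> ('v set \<Rightarrow> real) \<Rightarrow> bool" where
  "wcomplex d F w \<longleftrightarrow> finite F \<and> (\<forall>t\<in>F. finite t \<and> card t = d + 1)
     \<and> (\<forall>t\<in>F. w t > 0) \<and> sum w F = 1"

definition faces :: "'v set set \<Rightarrow> 'v set set" where
  "faces F = {s. \<exists>t\<in>F. s \<subseteq> t}"

definition facet_wt :: "'v set set \<Rightarrow> ('v set \<Rightarrow> real) \<Rightarrow> 'v set \<Rightarrow> real" where
  "facet_wt F w s = (\<Sum>t\<in>{t\<in>F. s \<subseteq> t}. w t)"

definition partite :: "nat \<Rightarrow> 'v set set \<Rightarrow> ('v \<Rightarrow> nat) \<Rightarrow> bool" where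
  "partite d F c \<longleftrightarrow> (\<forall>t\<in>F. bij_betw c t {0..d})"

definition link_vertices :: "'v set set \<Rightarrow> 'v set \<Rightarrow> 'v set" where
  "link_vertices F s = {v. v \<notin> s \<and> insert v s \<in> faces F}"

definition link_adj :: "'v set set \<Rightarrow> 'v set \<Rightarrow> 'v \<Rightarrow> 'v \<Rightarrow> bool" where
  "link_adj F s a b \<longleftrightarrow> a \<noteq> b \<and> a \<notin> s \<and> b \<notin> s \<and> insert a (insert b s) \<in> faces F"

definition link_connected :: "'v set set \<Rightarrow> 'v set \<Rightarrow> bool" where
  "link_connected F s \<longleftrightarrow>
     (\<forall>a\<in>link_vertices F s. \<forall>b\<in>link_vertices F s. (link_adj F s)\<^sup>*\<^sup>* a b)"

definition colored_link :: "('v \<Rightarrow> nat) \<Rightarrow> 'v set set \<Rightarrow> 'v set \<Rightarrow> nat \<Rightarrow> 'v set" where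
  "colored_link c F s i = {v\<in>link_vertices F s. c v = i}"

text \<open>A weighted bipartite graph: sides L, R and an edge distribution p on L x R.\<close>
definition marg_L :: "'v set \<Rightarrow> ('v \<Rightarrow> 'v \<Rightarrow> real) \<Rightarrow> 'v \<Rightarrow> real" where
  "marg_L R p a = (\<Sum>b\<in>R. p a b)"

definition marg_R :: "'v set \<Rightarrow> ('v \<Rightarrow> 'v \<Rightarrow> real) \<Rightarrow> 'v \<Rightarrow> real" where
  "marg_R L p b = (\<Sum>a\<in>L. p a b)"

definition winner :: "'v set \<Rightarrow> ('v \<Rightarrow> real) \<Rightarrow> ('v \<Rightarrow> real) \<Rightarrow> ('v \<Rightarrow> real) \<Rightarrow> real" where
  "winner A m f g = (\<Sum>x\<in>A. m x * f x * g x)"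

definition avg_op :: "'v set \<Rightarrow> ('v \<Rightarrow> 'v \<Rightarrow> real) \<Rightarrow> ('v \<Rightarrow> real) \<Rightarrow> 'v \<Rightarrow> real" where
  "avg_op R p f a = (\<Sum>b\<in>R. p a b * f b) / marg_L R p a"

definition bip_expander :: "'v set \<Rightarrow> 'v set \<Rightarrow> ('v \<Rightarrow> 'v \<Rightarrow> real) \<Rightarrow> real \<Rightarrow> bool" where
  "bip_expander L R p \<mu> \<longleftrightarrow>
     (\<forall>f g. winner R (marg_R L p) f f = 1 \<and> winner L (marg_L R p) g g = 1
        \<and> winner R (marg_R L p) f (\<lambda>_. 1) = 0
        \<longrightarrow> winner L (marg_L R p) (avg_op R p f) g \<le> \<mu>)"

definition link_edge_dist :: "'v set set \<Rightarrow> ('v set \<Rightarrow> real) \<Rightarrow> 'v set \<Rightarrow> 'v \<Rightarrow> 'v \<Rightarrow> real" where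
  "link_edge_dist F w s a b = facet_wt F w (insert a (insert b s)) / facet_wt F w s"

definition link_bip_expander ::
  "('v \<Rightarrow> nat) \<Rightarrow> 'v set set \<Rightarrow> ('v set \<Rightarrow> real) \<Rightarrow> 'v set \<Rightarrow> nat \<Rightarrow> nat \<Rightarrow> real \<Rightarrow> bool" where
  "link_bip_expander c F w s i j \<mu> =
     bip_expander (colored_link c F s i) (colored_link c F s j) (link_edge_dist F w s) \<mu>"

end

theory Submission
  imports Defs
begin

text \<open>Write \<open>E\<^sub>s\<close> for the expectation over facets \<open>t \<supseteq> s\<close> drawn with weight \<open>w\<close>, and \<open>t\<^sub>i\<close>
  for the colour-\<open>i\<close> vertex of \<open>t\<close>. The \<open>(i,j)\<close>-graph of the link of \<open>s\<close> is a
  \<open>\<mu>\<close>-expander iff \<open>E\<^sub>s[g(t\<^sub>i) f(t\<^sub>j)] \<le> \<mu> \<parallel>f\<parallel> \<parallel>g\<parallel>\<close> for centred \<open>f\<close>, \<open>g\<close>. Conditioning on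
  the vertex \<open>t\<^sub>m\<close> of a third colour and using a bound \<open>\<gamma>\<close> in the links of these vertices
  gives the trickle-down inequality \<open>L \<le> \<gamma> + (1 - \<gamma>) L\<^sup>2\<close> for the best constant \<open>L\<close> common
  to all colour pairs of \<open>s\<close>. Connectivity of the links forces \<open>L < 1\<close>, hence
  \<open>L \<le> \<gamma> / (1 - \<gamma>)\<close>; for \<open>\<gamma> = \<lambda> / ((k + 1) \<lambda> + 1)\<close> this is \<open>\<lambda> / (k \<lambda> + 1)\<close>, so a
  downward induction from the faces of size \<open>d - 1\<close> reaches every face with a constant
  \<open>\<le> \<lambda>\<close>.\<close>

lemma cauchy_schwarz_pair:
  fixes A B \<gamma> x y :: real
  assumes "A \<ge> 0" "B \<ge> 0" "\<gamma> \<ge> 0"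
  shows "\<gamma> * sqrt A * sqrt B + y * x \<le> sqrt (\<gamma> * A + x\<^sup>2) * sqrt (\<gamma> * B + y\<^sup>2)"
proof -
  define a b where "a = sqrt (\<gamma> * A)" and "b = sqrt (\<gamma> * B)"
  have ab: "\<gamma> * sqrt A * sqrt B = a * b"
    using assms by (simp add: a_def b_def real_sqrt_mult)
  have a2b2: "\<gamma> * A = a\<^sup>2" "\<gamma> * B = b\<^sup>2"
    using assms by (simp_all add: a_def b_def)
  have "(a\<^sup>2 + x\<^sup>2) * (b\<^sup>2 + y\<^sup>2) - (a * b + x * y)\<^sup>2 = (a * y - x * b)\<^sup>2"
    by algebra
  then have "(a * b + x * y)\<^sup>2 \<le> (a\<^sup>2 + x\<^sup>2) * (b\<^sup>2 + y\<^sup>2)"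
    by (metis diff_ge_0_iff_ge zero_le_power2)
  then have "a * b + x * y \<le> sqrt ((a\<^sup>2 + x\<^sup>2) * (b\<^sup>2 + y\<^sup>2))"
    by (simp add: real_le_rsqrt)
  then show ?thesis
    using ab a2b2 by (simp add: real_sqrt_mult mult.commute)
qed

lemma square_diff_le_twice:
  fixes x y z :: real
  shows "(x - z)\<^sup>2 \<le> 2 * (x - y)\<^sup>2 + 2 * (y - z)\<^sup>2"
proof -
  have "2 * (x - y)\<^sup>2 + 2 * (y - z)\<^sup>2 - (x - z)\<^sup>2 = ((x - y) - (y - z))\<^sup>2"
    by algebra
  then show ?thesis
    by (metis diff_ge_0_iff_ge zero_le_power2)
qed

lemma le_quadratic_fixed_point:
  fixes L \<gamma> :: real
  assumes "L < 1" and "L \<le> \<gamma> + (1 - \<gamma>) * L\<^sup>2"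
  shows "(1 - \<gamma>) * L \<le> \<gamma>"
proof -
  have "\<gamma> + (1 - \<gamma>) * L\<^sup>2 - L = (1 - L) * (\<gamma> - (1 - \<gamma>) * L)"
    by (simp add: power2_eq_square algebra_simps)
  then have "0 \<le> (1 - L) * (\<gamma> - (1 - \<gamma>) * L)"
    using assms(2) by linarith
  then show ?thesis
    using assms(1) by (simp add: zero_le_mult_iff)
qed

lemma trickle_constant_step:
  fixes lam L :: real and k :: nat
  assumes "0 < lam"
    and "(1 - lam / (real (Suc k) * lam + 1)) * L \<le> lam / (real (Suc k) * lam + 1)"
  shows "L \<le> lam / (real k * lam + 1)"
proof -
  have pos: "real k * lam + 1 > 0" "real (Suc k) * lam + 1 > 0"
    using assms(1) by (smt (verit) mult_nonneg_nonneg of_nat_0_le_iff)+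
  have "1 - lam / (real (Suc k) * lam + 1) = (real k * lam + 1) / (real (Suc k) * lam + 1)"
    using pos by (simp add: field_simps)
  then have "(real k * lam + 1) * L / (real (Suc k) * lam + 1) \<le> lam / (real (Suc k) * lam + 1)"
    using assms(2) by simp
  then have "(real k * lam + 1) * L \<le> lam"
    using pos by (simp add: divide_le_cancel)
  then show ?thesis
    using pos by (simp add: le_divide_eq mult.commute)
qed

lemma trickle_constant_bounds:
  fixes lam :: real and k :: nat
  assumes "0 < lam"
  shows "0 \<le> lam / (real (Suc k) * lam + 1)" "lam / (real (Suc k) * lam + 1) \<le> 1"
proof -
  have "0 \<le> real k * lam"
    using assms by simp
  then have "0 < real (Suc k) * lam + 1" "lam \<le> real (Suc k) * lam + 1"
    unfolding of_nat_Suc distrib_right using assms by linarith+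
  then show "0 \<le> lam / (real (Suc k) * lam + 1)" "lam / (real (Suc k) * lam + 1) \<le> 1"
    using assms by simp_all
qed

lemma winner_marg_R:
  "winner R (marg_R L p) f h = (\<Sum>a\<in>L. \<Sum>b\<in>R. p a b * (f b * h b))"
  unfolding winner_def marg_R_def sum_distrib_right mult.assoc by (rule sum.swap)

lemma winner_marg_L:
  "winner L (marg_L R p) g h = (\<Sum>a\<in>L. \<Sum>b\<in>R. p a b * (g a * h a))"
  by (simp add: winner_def marg_L_def sum_distrib_right mult.assoc)

lemma winner_avg_op:
  assumes "finite R" and "\<And>a b. p a b \<ge> 0"
  shows "winner L (marg_L R p) (avg_op R p f) g = (\<Sum>a\<in>L. \<Sum>b\<in>R. p a b * (g a * f b))"
proof -
  have "marg_L R p a * ((\<Sum>b\<in>R. p a b * f b) / marg_L R p a) = (\<Sum>b\<in>R. p a b * f b)" for a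
  proof (cases "marg_L R p a = 0")
    case True
    then have "\<forall>b\<in>R. p a b = 0"
      using sum_nonneg_eq_0_iff[OF assms(1), of "p a"] assms(2) by (simp add: marg_L_def)
    then show ?thesis
      by simp
  qed simp
  then show ?thesis
    unfolding winner_def avg_op_def by (simp add: sum_distrib_left sum_distrib_right mult_ac)
qed

locale partite_complex =
  fixes d :: nat and F :: "'v set set" and w :: "'v set \<Rightarrow> real" and c :: "'v \<Rightarrow> nat"
  assumes wcomplex: "wcomplex d F w" and partite: "partite d F c"
begin

definition facets_above :: "'v set \<Rightarrow> 'v set set" where
  "facets_above s = {t\<in>F. s \<subseteq> t}"

definition cond_exp :: "'v set \<Rightarrow> ('v set \<Rightarrow> real) \<Rightarrow> real" where
  "cond_exp s h = (\<Sum>t\<in>facets_above s. w t * h t) / facet_wt F w s"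

definition colored_vertex :: "'v set \<Rightarrow> nat \<Rightarrow> 'v" where
  "colored_vertex t i = (THE v. v \<in> t \<and> c v = i)"

lemma finite_facets: "finite F"
  using wcomplex by (simp add: wcomplex_def)

lemma finite_facet: "t \<in> F \<Longrightarrow> finite t"
  using wcomplex by (simp add: wcomplex_def)

lemma weight_pos: "t \<in> F \<Longrightarrow> w t > 0"
  using wcomplex by (simp add: wcomplex_def)

lemma bij_betw_color: "t \<in> F \<Longrightarrow> bij_betw c t {0..d}"
  using partite by (simp add: partite_def)

lemma inj_on_color: "t \<in> F \<Longrightarrow> inj_on c t"
  using bij_betw_color by (simp add: bij_betw_def)

lemma color_le: "t \<in> F \<Longrightarrow> v \<in> t \<Longrightarrow> c v \<le> d"
  using bij_betw_color[of t] by (auto simp: bij_betw_def)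

lemma finite_facets_above: "finite (facets_above s)"
  using finite_facets by (simp add: facets_above_def)

lemma facets_aboveD: "t \<in> facets_above s \<Longrightarrow> t \<in> F \<and> s \<subseteq> t"
  by (simp add: facets_above_def)

lemma facets_above_nonempty: "s \<in> faces F \<Longrightarrow> facets_above s \<noteq> {}"
  by (auto simp: faces_def facets_above_def)

lemma colored_vertex_eq: "t \<in> F \<Longrightarrow> v \<in> t \<Longrightarrow> c v = i \<Longrightarrow> colored_vertex t i = v"
  unfolding colored_vertex_def by (auto dest: inj_onD[OF inj_on_color])

lemma colored_vertex:
  assumes "t \<in> F" "i \<le> d"
  shows "colored_vertex t i \<in> t" "c (colored_vertex t i) = i"
proof -
  obtain v where "v \<in> t" "c v = i"
    using bij_betw_color[OF assms(1)] assms(2) by (force simp: bij_betw_def)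
  then show "colored_vertex t i \<in> t" "c (colored_vertex t i) = i"
    using colored_vertex_eq[OF assms(1)] by auto
qed

lemma colored_vertex_above:
  assumes "t \<in> facets_above s" "i \<le> d"
  shows "colored_vertex t i \<in> t" "c (colored_vertex t i) = i"
  using colored_vertex[of t i] facets_aboveD[OF assms(1)] assms(2) by auto

lemma colored_vertex_notin:
  "t \<in> facets_above s \<Longrightarrow> i \<le> d \<Longrightarrow> i \<notin> c ` s \<Longrightarrow> colored_vertex t i \<notin> s"
  by (metis colored_vertex_above(2) image_eqI)

lemma insert_colored_vertex_face:
  "t \<in> facets_above s \<Longrightarrow> i \<le> d \<Longrightarrow> insert (colored_vertex t i) s \<in> faces F"
  using colored_vertex_above(1)[of t s i] facets_aboveD[of t s] by (auto simp: faces_def)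

lemma faces_subset: "B \<in> faces F \<Longrightarrow> A \<subseteq> B \<Longrightarrow> A \<in> faces F"
  unfolding faces_def by blast

lemma face_finite_colors:
  assumes "s \<in> faces F"
  shows "finite s" "c ` s \<subseteq> {0..d}" "card (c ` s) = card s"
proof -
  obtain t where t: "t \<in> F" "s \<subseteq> t"
    using assms by (auto simp: faces_def)
  show "finite s"
    using finite_facet[OF t(1)] t(2) by (rule finite_subset[rotated])
  show "c ` s \<subseteq> {0..d}"
    using color_le t by auto
  show "card (c ` s) = card s"
    using inj_on_color[OF t(1)] t(2) by (intro card_image) (rule inj_on_subset)
qed

lemma card_insert_colored_vertex:
  assumes "s \<in> faces F" "t \<in> facets_above s" "m \<le> d" "m \<notin> c ` s"
  shows "card (insert (colored_vertex t m) s) = Suc (card s)"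
  using face_finite_colors(1)[OF assms(1)] colored_vertex_notin[OF assms(2-4)] by simp

definition color_pairs :: "'v set \<Rightarrow> (nat \<times> nat) set" where
  "color_pairs s = {(i, j). i \<le> d \<and> j \<le> d \<and> i \<notin> c ` s \<and> j \<notin> c ` s \<and> i \<noteq> j}"

lemma finite_color_pairs: "finite (color_pairs s)"
  by (rule finite_subset[of _ "{0..d} \<times> {0..d}"]) (auto simp: color_pairs_def)

lemma card_missing_colors:
  assumes "s \<in> faces F"
  shows "card ({0..d} - c ` s) = d + 1 - card s"
  using face_finite_colors[OF assms] by (simp add: card_Diff_subset finite_subset)

lemma color_pair_card_le:
  assumes "s \<in> faces F" "(i, j) \<in> color_pairs s"
  shows "card s \<le> d - 1"
proof -
  have "{i, j} \<subseteq> {0..d} - c ` s"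
    using assms(2) by (auto simp: color_pairs_def)
  then have "card {i, j} \<le> card ({0..d} - c ` s)"
    by (intro card_mono) auto
  moreover have "card {i, j} = 2"
    using assms(2) by (simp add: color_pairs_def)
  ultimately show ?thesis
    using card_missing_colors[OF assms(1)] by simp
qed

lemma exists_third_color:
  assumes "s \<in> faces F" "card s < d - 1"
  obtains m where "m \<le> d" "m \<notin> c ` s" "m \<noteq> i" "m \<noteq> j"
proof -
  have "\<not> {0..d} - c ` s \<subseteq> {i, j}"
  proof
    assume "{0..d} - c ` s \<subseteq> {i, j}"
    then have "card ({0..d} - c ` s) \<le> card {i, j}"
      by (intro card_mono) auto
    also have "\<dots> \<le> 2"
      by (simp add: card_insert_if)
    finally show False
      using card_missing_colors[OF assms(1)] assms(2) by simp
  qed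
  then obtain m where "m \<in> {0..d} - c ` s" "m \<notin> {i, j}"
    by blast
  then show ?thesis
    by (intro that) auto
qed

lemma missing_color_cases:
  assumes "s \<in> faces F" "card s = d - 1" "d \<ge> 1" "(i, j) \<in> color_pairs s" "k \<le> d" "k \<notin> c ` s"
  shows "k = i \<or> k = j"
proof (rule ccontr)
  assume k: "\<not> (k = i \<or> k = j)"
  have "{i, j, k} \<subseteq> {0..d} - c ` s"
    using assms(4-6) by (auto simp: color_pairs_def)
  then have "card {i, j, k} \<le> card ({0..d} - c ` s)"
    by (intro card_mono) auto
  moreover have "card {i, j, k} = 3"
    using k assms(4) by (auto simp: color_pairs_def)
  ultimately show False
    using card_missing_colors[OF assms(1)] assms(2,3) by simp
qed

lemma facet_wt_eq: "facet_wt F w s = sum w (facets_above s)"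
  by (simp add: facet_wt_def facets_above_def)

lemma facet_wt_nonneg: "facet_wt F w s \<ge> 0"
  unfolding facet_wt_eq by (auto intro: sum_nonneg less_imp_le weight_pos dest: facets_aboveD)

lemma facet_wt_pos:
  assumes "s \<in> faces F"
  shows "facet_wt F w s > 0"
proof -
  obtain t where "t \<in> facets_above s"
    using facets_above_nonempty[OF assms] by auto
  then show ?thesis
    unfolding facet_wt_eq using weight_pos
    by (intro sum_pos2[OF finite_facets_above]) (auto dest: facets_aboveD intro: less_imp_le)
qed

lemma cond_exp_cong: "(\<And>t. t \<in> facets_above s \<Longrightarrow> h t = g t) \<Longrightarrow> cond_exp s h = cond_exp s g"
  unfolding cond_exp_def by (simp cong: sum.cong)

lemma cond_exp_const: "s \<in> faces F \<Longrightarrow> cond_exp s (\<lambda>_. a) = a"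
  using facet_wt_pos[of s] by (simp add: cond_exp_def facet_wt_eq flip: sum_distrib_right)

lemma cond_exp_add: "cond_exp s (\<lambda>t. h t + g t) = cond_exp s h + cond_exp s g"
  unfolding cond_exp_def by (simp add: algebra_simps sum.distrib add_divide_distrib)

lemma cond_exp_diff: "cond_exp s (\<lambda>t. h t - g t) = cond_exp s h - cond_exp s g"
  unfolding cond_exp_def by (simp add: algebra_simps sum_subtractf diff_divide_distrib)

lemma cond_exp_cmult: "cond_exp s (\<lambda>t. a * h t) = a * cond_exp s h"
  unfolding cond_exp_def by (simp add: sum_distrib_left mult_ac)

lemma cond_exp_mono:
  "(\<And>t. t \<in> facets_above s \<Longrightarrow> h t \<le> g t) \<Longrightarrow> cond_exp s h \<le> cond_exp s g"
  unfolding cond_exp_def using facet_wt_nonneg[of s]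
  by (intro divide_right_mono sum_mono)
    (auto simp: facets_above_def weight_pos less_imp_le intro!: mult_left_mono)

lemma cond_exp_nonneg: "(\<And>t. t \<in> facets_above s \<Longrightarrow> h t \<ge> 0) \<Longrightarrow> cond_exp s h \<ge> 0"
  using cond_exp_mono[of s "\<lambda>_. 0" h] by (simp add: cond_exp_def)

lemma cond_exp_square_nonneg: "cond_exp s (\<lambda>t. (h t)\<^sup>2) \<ge> 0"
  by (rule cond_exp_nonneg) simp

lemma cond_exp_strict_mono:
  assumes "s \<in> faces F" "\<And>t. t \<in> facets_above s \<Longrightarrow> h t < g t"
  shows "cond_exp s h < cond_exp s g"
proof -
  have "(\<Sum>t\<in>facets_above s. w t * h t) < (\<Sum>t\<in>facets_above s. w t * g t)"
    using assms(2) weight_pos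
    by (intro sum_strict_mono[OF finite_facets_above facets_above_nonempty[OF assms(1)]])
      (simp add: facets_above_def)
  then show ?thesis
    unfolding cond_exp_def using facet_wt_pos[OF assms(1)] by (simp add: divide_strict_right_mono)
qed

lemma cond_exp_square_eq_0:
  assumes "s \<in> faces F" "cond_exp s (\<lambda>t. (h t)\<^sup>2) = 0" "t \<in> facets_above s"
  shows "h t = 0"
proof -
  have "(\<Sum>t\<in>facets_above s. w t * (h t)\<^sup>2) = 0"
    using assms(2) facet_wt_pos[OF assms(1)] by (simp add: cond_exp_def)
  moreover have "\<forall>t\<in>facets_above s. w t * (h t)\<^sup>2 \<ge> 0"
    using weight_pos by (auto simp: facets_above_def less_imp_le)
  ultimately have "w t * (h t)\<^sup>2 = 0"
    using sum_nonneg_eq_0_iff[OF finite_facets_above, where f = "\<lambda>t. w t * (h t)\<^sup>2"] assms(3) by simp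
  moreover have "w t > 0"
    using weight_pos assms(3) by (simp add: facets_above_def)
  ultimately show ?thesis
    by simp
qed

lemma cond_exp_shifted_product:
  assumes "s \<in> faces F"
  shows "cond_exp s (\<lambda>t. (a t - x) * (b t - y))
    = cond_exp s (\<lambda>t. a t * b t) - x * cond_exp s b - y * cond_exp s a + x * y"
proof -
  have "cond_exp s (\<lambda>t. (a t - x) * (b t - y))
      = cond_exp s (\<lambda>t. (a t * b t - x * b t) - (y * a t - x * y))"
    by (rule cond_exp_cong) (simp add: algebra_simps)
  then show ?thesis
    by (simp only: cond_exp_diff cond_exp_cmult cond_exp_const[OF assms])
qed

lemma cond_exp_centered_square:
  assumes "s \<in> faces F"
  shows "cond_exp s (\<lambda>t. (a t - x)\<^sup>2) = cond_exp s (\<lambda>t. (a t)\<^sup>2) - 2 * x * cond_exp s a + x\<^sup>2"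
  using cond_exp_shifted_product[OF assms, of a x a x] by (simp add: power2_eq_square)

lemma cond_exp_cauchy_schwarz:
  "cond_exp s (\<lambda>t. a t * b t) \<le> sqrt (cond_exp s (\<lambda>t. (a t)\<^sup>2)) * sqrt (cond_exp s (\<lambda>t. (b t)\<^sup>2))"
proof -
  let ?A = "facets_above s"
  have "(\<Sum>t\<in>?A. (sqrt (w t) * a t) * (sqrt (w t) * b t))\<^sup>2
     \<le> (\<Sum>t\<in>?A. (sqrt (w t) * a t)\<^sup>2) * (\<Sum>t\<in>?A. (sqrt (w t) * b t)\<^sup>2)"
    by (rule Cauchy_Schwarz_ineq_sum)
  moreover have "(sqrt (w t) * a t) * (sqrt (w t) * b t) = w t * (a t * b t)"
    "(sqrt (w t) * a t)\<^sup>2 = w t * (a t)\<^sup>2" "(sqrt (w t) * b t)\<^sup>2 = w t * (b t)\<^sup>2"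
    if "t \<in> ?A" for t
    using weight_pos that by (auto simp: facets_above_def power2_eq_square less_imp_le)
  ultimately have "(\<Sum>t\<in>?A. w t * (a t * b t))\<^sup>2
     \<le> (\<Sum>t\<in>?A. w t * (a t)\<^sup>2) * (\<Sum>t\<in>?A. w t * (b t)\<^sup>2)"
    by (simp cong: sum.cong)
  then have "(cond_exp s (\<lambda>t. a t * b t))\<^sup>2 \<le> cond_exp s (\<lambda>t. (a t)\<^sup>2) * cond_exp s (\<lambda>t. (b t)\<^sup>2)"
    unfolding cond_exp_def using facet_wt_nonneg[of s]
    by (simp add: power_divide divide_right_mono power2_eq_square)
  then have "\<bar>cond_exp s (\<lambda>t. a t * b t)\<bar>
      \<le> sqrt (cond_exp s (\<lambda>t. (a t)\<^sup>2) * cond_exp s (\<lambda>t. (b t)\<^sup>2))"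
    by (metis real_sqrt_abs real_sqrt_le_mono)
  then show ?thesis
    by (simp add: real_sqrt_mult)
qed

lemma facets_above_insert_colored_vertex:
  assumes "t \<in> facets_above s" "m \<le> d"
  shows "facets_above (insert (colored_vertex t m) s) = {u \<in> facets_above s. colored_vertex u m = colored_vertex t m}"
proof (intro set_eqI iffI)
  fix u
  assume "u \<in> facets_above (insert (colored_vertex t m) s)"
  then show "u \<in> {u \<in> facets_above s. colored_vertex u m = colored_vertex t m}"
    using colored_vertex_above(2)[OF assms] colored_vertex_eq
    by (auto simp: facets_above_def)
next
  fix u
  assume "u \<in> {u \<in> facets_above s. colored_vertex u m = colored_vertex t m}"
  then show "u \<in> facets_above (insert (colored_vertex t m) s)"
    using colored_vertex_above(1)[of u s m] assms(2) by (auto simp: facets_above_def)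
qed

lemma cond_exp_tower:
  assumes "s \<in> faces F" "m \<le> d"
  shows "cond_exp s h = cond_exp s (\<lambda>t. cond_exp (insert (colored_vertex t m) s) h)"
proof -
  let ?A = "facets_above s" and ?v = "\<lambda>t. colored_vertex t m"
  let ?B = "\<lambda>t. facets_above (insert (?v t) s)"
  have fibre: "{u \<in> ?A. ?v u = x} = ?B t" if "t \<in> ?A" "x = ?v t" for t x
    using facets_above_insert_colored_vertex[OF that(1) assms(2)] that(2) by simp
  have group: "(\<Sum>t\<in>?A. \<phi> t) = (\<Sum>x\<in>?v ` ?A. \<Sum>u\<in>{u \<in> ?A. ?v u = x}. \<phi> u)" for \<phi>
    by (rule sum.image_gen[OF finite_facets_above])
  have inner: "(\<Sum>u\<in>{u \<in> ?A. ?v u = x}. w u * cond_exp (insert (?v u) s) h)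
      = (\<Sum>u\<in>{u \<in> ?A. ?v u = x}. w u * h u)" if x: "x \<in> ?v ` ?A" for x
  proof -
    obtain t where t: "t \<in> ?A" "x = ?v t"
      using x by blast
    have pos: "facet_wt F w (insert x s) > 0"
      using facet_wt_pos insert_colored_vertex_face[OF t(1) assms(2)] t(2) by simp
    have "(\<Sum>u\<in>{u \<in> ?A. ?v u = x}. w u * cond_exp (insert (?v u) s) h)
        = (\<Sum>u\<in>{u \<in> ?A. ?v u = x}. w u) * cond_exp (insert x s) h"
      unfolding sum_distrib_right by (rule sum.cong) auto
    also have "\<dots> = (\<Sum>u\<in>{u \<in> ?A. ?v u = x}. w u * h u)"
      using pos fibre[OF t] t(2) by (simp add: cond_exp_def facet_wt_eq)
    finally show ?thesis .
  qed
  have "(\<Sum>t\<in>?A. w t * cond_exp (insert (?v t) s) h) = (\<Sum>t\<in>?A. w t * h t)"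
    unfolding group[of "\<lambda>t. w t * cond_exp (insert (?v t) s) h"] group[of "\<lambda>t. w t * h t"]
    by (rule sum.cong[OF refl]) (rule inner)
  then show ?thesis
    by (simp add: cond_exp_def)
qed

lemma colored_vertex_above_insert:
  assumes "t \<in> facets_above s" "m \<le> d" "u \<in> facets_above (insert (colored_vertex t m) s)"
  shows "colored_vertex u m = colored_vertex t m"
  using facets_above_insert_colored_vertex[OF assms(1,2)] assms(3) by blast

lemma cond_exp_tower_mult:
  assumes s: "s \<in> faces F" and m: "m \<le> d"
  shows "cond_exp s (\<lambda>t. \<phi> (colored_vertex t m) * h t)
    = cond_exp s (\<lambda>t. \<phi> (colored_vertex t m) * cond_exp (insert (colored_vertex t m) s) h)"
proof -
  have "cond_exp (insert (colored_vertex t m) s) (\<lambda>u. \<phi> (colored_vertex u m) * h u)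
      = \<phi> (colored_vertex t m) * cond_exp (insert (colored_vertex t m) s) h"
    if "t \<in> facets_above s" for t
    using colored_vertex_above_insert[OF that m]
    by (simp add: cond_exp_cong[where g = "\<lambda>u. \<phi> (colored_vertex t m) * h u"] cond_exp_cmult)
  then show ?thesis
    by (subst cond_exp_tower[OF s m]) (rule cond_exp_cong)
qed

definition corr_bound :: "'v set \<Rightarrow> nat \<Rightarrow> nat \<Rightarrow> real \<Rightarrow> bool" where
  "corr_bound s i j \<mu> \<longleftrightarrow> (\<forall>f g.
     cond_exp s (\<lambda>t. f (colored_vertex t j)) = 0 \<longrightarrow> cond_exp s (\<lambda>t. g (colored_vertex t i)) = 0 \<longrightarrow>
     cond_exp s (\<lambda>t. g (colored_vertex t i) * f (colored_vertex t j))
       \<le> \<mu> * sqrt (cond_exp s (\<lambda>t. (f (colored_vertex t j))\<^sup>2))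
           * sqrt (cond_exp s (\<lambda>t. (g (colored_vertex t i))\<^sup>2)))"

definition unit_corr_bound :: "'v set \<Rightarrow> nat \<Rightarrow> nat \<Rightarrow> real \<Rightarrow> bool" where
  "unit_corr_bound s i j \<mu> \<longleftrightarrow> (\<forall>f g.
     cond_exp s (\<lambda>t. f (colored_vertex t j)) = 0 \<longrightarrow> cond_exp s (\<lambda>t. (f (colored_vertex t j))\<^sup>2) = 1 \<longrightarrow>
     cond_exp s (\<lambda>t. (g (colored_vertex t i))\<^sup>2) = 1 \<longrightarrow>
     cond_exp s (\<lambda>t. g (colored_vertex t i) * f (colored_vertex t j)) \<le> \<mu>)"

lemma corr_bound_mono:
  assumes "corr_bound s i j \<mu>" "\<mu> \<le> \<mu>'"
  shows "corr_bound s i j \<mu>'"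
  unfolding corr_bound_def
proof (intro allI impI)
  fix f g
  assume "cond_exp s (\<lambda>t. f (colored_vertex t j)) = 0" "cond_exp s (\<lambda>t. g (colored_vertex t i)) = 0"
  then have "cond_exp s (\<lambda>t. g (colored_vertex t i) * f (colored_vertex t j))
      \<le> \<mu> * sqrt (cond_exp s (\<lambda>t. (f (colored_vertex t j))\<^sup>2))
          * sqrt (cond_exp s (\<lambda>t. (g (colored_vertex t i))\<^sup>2))"
    using assms(1) unfolding corr_bound_def by blast
  also have "\<dots> \<le> \<mu>' * sqrt (cond_exp s (\<lambda>t. (f (colored_vertex t j))\<^sup>2))
      * sqrt (cond_exp s (\<lambda>t. (g (colored_vertex t i))\<^sup>2))"
    using assms(2) cond_exp_square_nonneg by (intro mult_right_mono) auto
  finally show "cond_exp s (\<lambda>t. g (colored_vertex t i) * f (colored_vertex t j))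
      \<le> \<mu>' * sqrt (cond_exp s (\<lambda>t. (f (colored_vertex t j))\<^sup>2))
          * sqrt (cond_exp s (\<lambda>t. (g (colored_vertex t i))\<^sup>2))" .
qed

lemma corr_bound_Inf:
  assumes "S \<noteq> {}" and "\<forall>\<mu>\<in>S. corr_bound s i j \<mu>"
  shows "corr_bound s i j (Inf S)"
  unfolding corr_bound_def
proof (intro allI impI)
  fix f g
  assume centered: "cond_exp s (\<lambda>t. f (colored_vertex t j)) = 0"
    "cond_exp s (\<lambda>t. g (colored_vertex t i)) = 0"
  define x where "x = cond_exp s (\<lambda>t. g (colored_vertex t i) * f (colored_vertex t j))"
  define C where "C = sqrt (cond_exp s (\<lambda>t. (f (colored_vertex t j))\<^sup>2))
    * sqrt (cond_exp s (\<lambda>t. (g (colored_vertex t i))\<^sup>2))"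
  have "C \<ge> 0"
    using cond_exp_square_nonneg by (simp add: C_def)
  have le: "x \<le> \<mu> * C" if "\<mu> \<in> S" for \<mu>
    using assms(2) that centered unfolding corr_bound_def x_def C_def by (simp add: mult.assoc)
  have "x \<le> Inf S * C"
  proof (cases "C = 0")
    case True
    then show ?thesis
      using le assms(1) by fastforce
  next
    case False
    then have "C > 0"
      using \<open>C \<ge> 0\<close> by simp
    have "x / C \<le> Inf S"
      using le \<open>C > 0\<close> by (intro cInf_greatest[OF assms(1)]) (simp add: divide_le_eq)
    then show ?thesis
      using \<open>C > 0\<close> by (simp add: divide_le_eq)
  qed
  then show "cond_exp s (\<lambda>t. g (colored_vertex t i) * f (colored_vertex t j))
      \<le> Inf S * sqrt (cond_exp s (\<lambda>t. (f (colored_vertex t j))\<^sup>2))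
          * sqrt (cond_exp s (\<lambda>t. (g (colored_vertex t i))\<^sup>2))"
    by (simp add: x_def C_def mult.assoc)
qed

lemma corr_bound_imp_unit_corr_bound:
  assumes s: "s \<in> faces F" and "\<mu> \<ge> 0" and "corr_bound s i j \<mu>"
  shows "unit_corr_bound s i j \<mu>"
  unfolding unit_corr_bound_def
proof (intro allI impI)
  fix f g
  assume f0: "cond_exp s (\<lambda>t. f (colored_vertex t j)) = 0"
    and f1: "cond_exp s (\<lambda>t. (f (colored_vertex t j))\<^sup>2) = 1"
    and g1: "cond_exp s (\<lambda>t. (g (colored_vertex t i))\<^sup>2) = 1"
  define y where "y = cond_exp s (\<lambda>t. g (colored_vertex t i))"
  define g' where "g' v = g v - y" for v
  have "cond_exp s (\<lambda>t. g' (colored_vertex t i)) = 0"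
    by (simp add: g'_def cond_exp_diff cond_exp_const[OF s] y_def)
  then have "cond_exp s (\<lambda>t. g' (colored_vertex t i) * f (colored_vertex t j))
      \<le> \<mu> * sqrt (cond_exp s (\<lambda>t. (f (colored_vertex t j))\<^sup>2))
          * sqrt (cond_exp s (\<lambda>t. (g' (colored_vertex t i))\<^sup>2))"
    using assms(3) f0 unfolding corr_bound_def by blast
  also have "\<dots> = \<mu> * sqrt (cond_exp s (\<lambda>t. (g' (colored_vertex t i))\<^sup>2))"
    using f1 by simp
  also have "\<dots> \<le> \<mu>"
    using cond_exp_centered_square[OF s, of "\<lambda>t. g (colored_vertex t i)" y] g1 assms(2)
    by (intro mult_left_le) (simp_all add: g'_def y_def power2_eq_square)
  finally show "cond_exp s (\<lambda>t. g (colored_vertex t i) * f (colored_vertex t j)) \<le> \<mu>"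
    using cond_exp_shifted_product[OF s, of "\<lambda>t. g (colored_vertex t i)" y
        "\<lambda>t. f (colored_vertex t j)" 0] f0
    by (simp add: g'_def)
qed

lemma unit_corr_bound_imp_corr_bound:
  assumes s: "s \<in> faces F" and "unit_corr_bound s i j \<mu>"
  shows "corr_bound s i j \<mu>"
  unfolding corr_bound_def
proof (intro allI impI)
  fix f g
  assume f0: "cond_exp s (\<lambda>t. f (colored_vertex t j)) = 0"
    and g0: "cond_exp s (\<lambda>t. g (colored_vertex t i)) = 0"
  define a b where "a = cond_exp s (\<lambda>t. (f (colored_vertex t j))\<^sup>2)"
    and "b = cond_exp s (\<lambda>t. (g (colored_vertex t i))\<^sup>2)"
  show "cond_exp s (\<lambda>t. g (colored_vertex t i) * f (colored_vertex t j)) \<le> \<mu> * sqrt a * sqrt b"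
  proof (cases "a = 0 \<or> b = 0")
    case True
    then have "cond_exp s (\<lambda>t. g (colored_vertex t i) * f (colored_vertex t j)) = cond_exp s (\<lambda>_. 0)"
      using cond_exp_square_eq_0[OF s, of "\<lambda>t. f (colored_vertex t j)"]
        cond_exp_square_eq_0[OF s, of "\<lambda>t. g (colored_vertex t i)"]
      by (intro cond_exp_cong) (auto simp: a_def b_def)
    then show ?thesis
      using True cond_exp_const[OF s, of 0] by auto
  next
    case False
    then have "a > 0" "b > 0"
      using cond_exp_square_nonneg[of s "\<lambda>t. f (colored_vertex t j)"]
        cond_exp_square_nonneg[of s "\<lambda>t. g (colored_vertex t i)"]
      by (auto simp: a_def b_def)
    define f' g' where "f' v = f v / sqrt a" and "g' v = g v / sqrt b" for v
    have "cond_exp s (\<lambda>t. f' (colored_vertex t j)) = 0"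
      using f0 cond_exp_cmult[of s "1 / sqrt a" "\<lambda>t. f (colored_vertex t j)"] by (simp add: f'_def)
    moreover have "cond_exp s (\<lambda>t. (f' (colored_vertex t j))\<^sup>2) = 1"
      using cond_exp_cmult[of s "1 / a" "\<lambda>t. (f (colored_vertex t j))\<^sup>2"] \<open>a > 0\<close>
      by (simp add: f'_def power_divide a_def)
    moreover have "cond_exp s (\<lambda>t. (g' (colored_vertex t i))\<^sup>2) = 1"
      using cond_exp_cmult[of s "1 / b" "\<lambda>t. (g (colored_vertex t i))\<^sup>2"] \<open>b > 0\<close>
      by (simp add: g'_def power_divide b_def)
    ultimately have "cond_exp s (\<lambda>t. g' (colored_vertex t i) * f' (colored_vertex t j)) \<le> \<mu>"
      using assms(2) unfolding unit_corr_bound_def by blast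
    moreover have "cond_exp s (\<lambda>t. g' (colored_vertex t i) * f' (colored_vertex t j))
        = cond_exp s (\<lambda>t. g (colored_vertex t i) * f (colored_vertex t j)) / (sqrt a * sqrt b)"
      using cond_exp_cmult[of s "1 / (sqrt a * sqrt b)"] by (simp add: f'_def g'_def mult.commute)
    ultimately show ?thesis
      using \<open>a > 0\<close> \<open>b > 0\<close> by (simp add: divide_le_eq mult.assoc)
  qed
qed

subsection \<open>Trickle-down\<close>

definition cond_var :: "'v set \<Rightarrow> ('v set \<Rightarrow> real) \<Rightarrow> real" where
  "cond_var s h = cond_exp s (\<lambda>t. (h t - cond_exp s h)\<^sup>2)"

lemma cond_var_nonneg: "cond_var s h \<ge> 0"
  by (simp add: cond_var_def cond_exp_square_nonneg)

lemma cond_var_eq: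
  assumes "s \<in> faces F"
  shows "cond_var s h = cond_exp s (\<lambda>t. (h t)\<^sup>2) - (cond_exp s h)\<^sup>2"
  using cond_exp_centered_square[OF assms, of h "cond_exp s h"]
  by (simp add: cond_var_def power2_eq_square)

lemma cond_exp_total_variance:
  assumes "s \<in> faces F" "m \<le> d"
  shows "cond_exp s (\<lambda>t. (h t)\<^sup>2)
    = cond_exp s (\<lambda>t. cond_var (insert (colored_vertex t m) s) h)
      + cond_exp s (\<lambda>t. (cond_exp (insert (colored_vertex t m) s) h)\<^sup>2)"
proof -
  have "cond_exp s (\<lambda>t. cond_var (insert (colored_vertex t m) s) h)
      = cond_exp s (\<lambda>t. cond_exp (insert (colored_vertex t m) s) (\<lambda>u. (h u)\<^sup>2)
          - (cond_exp (insert (colored_vertex t m) s) h)\<^sup>2)"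
    using cond_var_eq insert_colored_vertex_face assms(2) by (intro cond_exp_cong) simp
  then show ?thesis
    using cond_exp_tower[OF assms, of "\<lambda>u. (h u)\<^sup>2"] by (simp add: cond_exp_diff)
qed

lemma corr_bound_covariance:
  assumes s: "s \<in> faces F" and "corr_bound s i j \<gamma>"
  shows "cond_exp s (\<lambda>t. g (colored_vertex t i) * f (colored_vertex t j))
    \<le> \<gamma> * sqrt (cond_var s (\<lambda>t. f (colored_vertex t j))) * sqrt (cond_var s (\<lambda>t. g (colored_vertex t i)))
      + cond_exp s (\<lambda>t. g (colored_vertex t i)) * cond_exp s (\<lambda>t. f (colored_vertex t j))"
proof -
  define x y where "x = cond_exp s (\<lambda>t. f (colored_vertex t j))"
    and "y = cond_exp s (\<lambda>t. g (colored_vertex t i))"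
  have "cond_exp s (\<lambda>t. (g (colored_vertex t i) - y) * (f (colored_vertex t j) - x))
      \<le> \<gamma> * sqrt (cond_exp s (\<lambda>t. (f (colored_vertex t j) - x)\<^sup>2))
          * sqrt (cond_exp s (\<lambda>t. (g (colored_vertex t i) - y)\<^sup>2))"
    using assms(2) unfolding corr_bound_def
    by (elim allE[of _ "\<lambda>v. f v - x"] allE[of _ "\<lambda>v. g v - y"])
      (simp add: cond_exp_diff cond_exp_const[OF s] x_def y_def)
  then show ?thesis
    using cond_exp_shifted_product[OF s, of "\<lambda>t. g (colored_vertex t i)" y "\<lambda>t. f (colored_vertex t j)" x]
    by (simp add: cond_var_def x_def y_def mult.commute)
qed

text \<open>The conditional means \<open>\<Phi>(t\<^sub>m)\<close> of a centred \<open>f(t\<^sub>j)\<close> form a centred function of the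
  colour-\<open>m\<close> vertex whose correlation with \<open>f\<close> is its own second moment.\<close>

lemma cond_mean_square_le:
  assumes s: "s \<in> faces F" and m: "m \<le> d" and "corr_bound s m j \<Lambda>" "\<Lambda> \<ge> 0"
    and f0: "cond_exp s (\<lambda>t. f (colored_vertex t j)) = 0"
  shows "cond_exp s (\<lambda>t. (cond_exp (insert (colored_vertex t m) s) (\<lambda>u. f (colored_vertex u j)))\<^sup>2)
    \<le> \<Lambda>\<^sup>2 * cond_exp s (\<lambda>t. (f (colored_vertex t j))\<^sup>2)"
proof -
  define \<Phi> where "\<Phi> v = cond_exp (insert v s) (\<lambda>u. f (colored_vertex u j))" for v
  have "cond_exp s (\<lambda>t. \<Phi> (colored_vertex t m)) = 0"
    using f0 cond_exp_tower[OF s m, of "\<lambda>u. f (colored_vertex u j)"] by (simp add: \<Phi>_def)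
  then have "cond_exp s (\<lambda>t. \<Phi> (colored_vertex t m) * f (colored_vertex t j))
      \<le> \<Lambda> * sqrt (cond_exp s (\<lambda>t. (f (colored_vertex t j))\<^sup>2))
          * sqrt (cond_exp s (\<lambda>t. (\<Phi> (colored_vertex t m))\<^sup>2))"
    using assms(3) f0 unfolding corr_bound_def by blast
  moreover have "cond_exp s (\<lambda>t. \<Phi> (colored_vertex t m) * f (colored_vertex t j))
      = cond_exp s (\<lambda>t. (\<Phi> (colored_vertex t m))\<^sup>2)"
    using cond_exp_tower_mult[OF s m, of \<Phi> "\<lambda>u. f (colored_vertex u j)"]
    by (simp add: \<Phi>_def power2_eq_square)
  moreover define a b where "a = sqrt (cond_exp s (\<lambda>t. (\<Phi> (colored_vertex t m))\<^sup>2))"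
    and "b = sqrt (cond_exp s (\<lambda>t. (f (colored_vertex t j))\<^sup>2))"
  moreover have a2: "a\<^sup>2 = cond_exp s (\<lambda>t. (\<Phi> (colored_vertex t m))\<^sup>2)"
    and b2: "b\<^sup>2 = cond_exp s (\<lambda>t. (f (colored_vertex t j))\<^sup>2)"
    and "a \<ge> 0" "b \<ge> 0"
    using cond_exp_square_nonneg by (simp_all add: a_def b_def)
  ultimately have "a * a \<le> (\<Lambda> * b) * a"
    by (simp add: power2_eq_square)
  then have "a \<le> \<Lambda> * b"
    using \<open>a \<ge> 0\<close> \<open>b \<ge> 0\<close> \<open>\<Lambda> \<ge> 0\<close> by (cases "a = 0") (simp_all add: mult_le_cancel_right)
  then have "a\<^sup>2 \<le> (\<Lambda> * b)\<^sup>2"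
    using \<open>a \<ge> 0\<close> by (rule power_mono)
  then show ?thesis
    using a2 b2 by (simp add: \<Phi>_def power_mult_distrib)
qed

lemma trickle_energy_le:
  assumes s: "s \<in> faces F" and m: "m \<le> d" and "corr_bound s m j \<Lambda>" "\<Lambda> \<ge> 0"
    and f0: "cond_exp s (\<lambda>t. f (colored_vertex t j)) = 0" and "0 \<le> \<gamma>" "\<gamma> \<le> 1"
  shows "cond_exp s (\<lambda>t. \<gamma> * cond_var (insert (colored_vertex t m) s) (\<lambda>u. f (colored_vertex u j))
      + (cond_exp (insert (colored_vertex t m) s) (\<lambda>u. f (colored_vertex u j)))\<^sup>2)
    \<le> (\<gamma> + (1 - \<gamma>) * \<Lambda>\<^sup>2) * cond_exp s (\<lambda>t. (f (colored_vertex t j))\<^sup>2)"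
proof -
  let ?f = "\<lambda>u. f (colored_vertex u j)" and ?s = "\<lambda>t. insert (colored_vertex t m) s"
  have "cond_exp s (\<lambda>t. \<gamma> * cond_var (?s t) ?f + (cond_exp (?s t) ?f)\<^sup>2)
      = \<gamma> * cond_exp s (\<lambda>t. (?f t)\<^sup>2) + (1 - \<gamma>) * cond_exp s (\<lambda>t. (cond_exp (?s t) ?f)\<^sup>2)"
    using cond_exp_total_variance[OF s m, of ?f]
    by (simp add: cond_exp_add cond_exp_cmult algebra_simps)
  also have "\<dots> \<le> \<gamma> * cond_exp s (\<lambda>t. (?f t)\<^sup>2) + (1 - \<gamma>) * (\<Lambda>\<^sup>2 * cond_exp s (\<lambda>t. (?f t)\<^sup>2))"
    using cond_mean_square_le[OF assms(1-5)] assms(7) by (intro add_left_mono mult_left_mono) auto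
  finally show ?thesis
    by (simp add: algebra_simps)
qed

text \<open>Oppenheim's trickle-down step: condition on the vertex of a third colour \<open>m\<close>.\<close>

lemma corr_bound_trickle_down:
  assumes s: "s \<in> faces F" and m: "m \<le> d" and \<gamma>: "0 \<le> \<gamma>" "\<gamma> \<le> 1" and "\<Lambda> \<ge> 0"
    and "corr_bound s m j \<Lambda>" "corr_bound s m i \<Lambda>"
    and links: "\<forall>t\<in>facets_above s. corr_bound (insert (colored_vertex t m) s) i j \<gamma>"
  shows "corr_bound s i j (\<gamma> + (1 - \<gamma>) * \<Lambda>\<^sup>2)"
  unfolding corr_bound_def
proof (intro allI impI)
  fix f g
  assume f0: "cond_exp s (\<lambda>t. f (colored_vertex t j)) = 0"
    and g0: "cond_exp s (\<lambda>t. g (colored_vertex t i)) = 0"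
  let ?f = "\<lambda>u. f (colored_vertex u j)" and ?g = "\<lambda>u. g (colored_vertex u i)"
    and ?s = "\<lambda>t. insert (colored_vertex t m) s" and ?\<mu> = "\<gamma> + (1 - \<gamma>) * \<Lambda>\<^sup>2"
  define X Y where "X = (\<lambda>t. \<gamma> * cond_var (?s t) ?f + (cond_exp (?s t) ?f)\<^sup>2)"
    and "Y = (\<lambda>t. \<gamma> * cond_var (?s t) ?g + (cond_exp (?s t) ?g)\<^sup>2)"
  have XY: "X t \<ge> 0" "Y t \<ge> 0" for t
    using \<gamma> cond_var_nonneg by (simp_all add: X_def Y_def)
  have EXY: "0 \<le> cond_exp s X" "0 \<le> cond_exp s Y"
    using XY by (simp_all add: cond_exp_nonneg)
  have "cond_exp (?s t) (\<lambda>u. ?g u * ?f u) \<le> sqrt (X t) * sqrt (Y t)" if "t \<in> facets_above s" for t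
    using corr_bound_covariance[OF insert_colored_vertex_face[OF that m] links[rule_format, OF that]]
      cauchy_schwarz_pair[OF cond_var_nonneg cond_var_nonneg \<gamma>(1)]
    unfolding X_def Y_def by (rule order_trans)
  then have "cond_exp s (\<lambda>t. ?g t * ?f t) \<le> cond_exp s (\<lambda>t. sqrt (X t) * sqrt (Y t))"
    by (subst cond_exp_tower[OF s m]) (rule cond_exp_mono)
  also have "\<dots> \<le> sqrt (cond_exp s X) * sqrt (cond_exp s Y)"
    using cond_exp_cauchy_schwarz[of s "\<lambda>t. sqrt (X t)" "\<lambda>t. sqrt (Y t)"] XY by simp
  also have "\<dots> \<le> sqrt (?\<mu> * cond_exp s (\<lambda>t. (?f t)\<^sup>2)) * sqrt (?\<mu> * cond_exp s (\<lambda>t. (?g t)\<^sup>2))"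
  proof -
    have X: "sqrt (cond_exp s X) \<le> sqrt (?\<mu> * cond_exp s (\<lambda>t. (?f t)\<^sup>2))"
      using trickle_energy_le[OF s m assms(6,5) f0 \<gamma>] by (simp add: X_def)
    have Y: "sqrt (cond_exp s Y) \<le> sqrt (?\<mu> * cond_exp s (\<lambda>t. (?g t)\<^sup>2))"
      using trickle_energy_le[OF s m assms(7,5) g0 \<gamma>] by (simp add: Y_def)
    show ?thesis
      using EXY by (intro mult_mono[OF X Y] order_trans[OF _ X]) simp_all
  qed
  also have "\<dots> = ?\<mu> * sqrt (cond_exp s (\<lambda>t. (?f t)\<^sup>2)) * sqrt (cond_exp s (\<lambda>t. (?g t)\<^sup>2))"
    using \<gamma> by (simp add: real_sqrt_mult)
  finally show "cond_exp s (\<lambda>t. ?g t * ?f t)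
      \<le> ?\<mu> * sqrt (cond_exp s (\<lambda>t. (?f t)\<^sup>2)) * sqrt (cond_exp s (\<lambda>t. (?g t)\<^sup>2))" .
qed

subsection \<open>Bipartite expansion of a link in terms of conditional expectations\<close>

lemma finite_colored_link: "finite (colored_link c F s i)"
proof (rule finite_subset)
  show "colored_link c F s i \<subseteq> \<Union>F"
    by (auto simp: colored_link_def link_vertices_def faces_def)
  show "finite (\<Union>F)"
    using finite_facets finite_facet by blast
qed

lemma colored_vertex_in_colored_link:
  assumes "t \<in> facets_above s" "i \<le> d" "i \<notin> c ` s"
  shows "colored_vertex t i \<in> colored_link c F s i"
  using colored_vertex_notin[OF assms] insert_colored_vertex_face[OF assms(1,2)]
    colored_vertex_above[OF assms(1,2)]
  by (simp add: colored_link_def link_vertices_def)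

lemma colored_link_inter_facet:
  assumes "t \<in> facets_above s" "i \<le> d" "i \<notin> c ` s"
  shows "{a \<in> colored_link c F s i. a \<in> t} = {colored_vertex t i}"
proof (intro equalityI subsetI)
  fix a
  assume "a \<in> {a \<in> colored_link c F s i. a \<in> t}"
  then show "a \<in> {colored_vertex t i}"
    using colored_vertex_eq[of t a i] facets_aboveD[OF assms(1)] by (simp add: colored_link_def)
next
  fix a
  assume "a \<in> {colored_vertex t i}"
  then show "a \<in> {a \<in> colored_link c F s i. a \<in> t}"
    using colored_vertex_in_colored_link[OF assms] colored_vertex_above(1)[OF assms(1,2)] by simp
qed

lemma sum_colored_link_facet:
  assumes "t \<in> facets_above s" "i \<le> d" "i \<notin> c ` s"
  shows "(\<Sum>a\<in>colored_link c F s i. if a \<in> t then \<phi> a else 0) = \<phi> (colored_vertex t i)"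
proof -
  have "(\<Sum>a\<in>colored_link c F s i. if a \<in> t then \<phi> a else 0)
      = (\<Sum>a\<in>{a \<in> colored_link c F s i. a \<in> t}. \<phi> a)"
    by (rule sum.inter_filter[OF finite_colored_link, symmetric])
  then show ?thesis
    using colored_link_inter_facet[OF assms] by simp
qed

lemma link_edge_dist_eq:
  "link_edge_dist F w s a b
    = (\<Sum>t\<in>facets_above s. if a \<in> t \<and> b \<in> t then w t else 0) / facet_wt F w s"
proof -
  have "{t \<in> F. insert a (insert b s) \<subseteq> t} = {t \<in> facets_above s. a \<in> t \<and> b \<in> t}"
    by (auto simp: facets_above_def)
  then have "facet_wt F w (insert a (insert b s))
      = (\<Sum>t\<in>facets_above s. if a \<in> t \<and> b \<in> t then w t else 0)"
    by (simp add: facet_wt_def sum.inter_filter[OF finite_facets_above])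
  then show ?thesis
    by (simp add: link_edge_dist_def)
qed

lemma link_edge_dist_nonneg: "link_edge_dist F w s a b \<ge> 0"
  using facet_wt_nonneg by (simp add: link_edge_dist_def)

lemma sum_link_edge_dist:
  assumes "i \<le> d" "j \<le> d" "i \<notin> c ` s" "j \<notin> c ` s"
  shows "(\<Sum>a\<in>colored_link c F s i. \<Sum>b\<in>colored_link c F s j. link_edge_dist F w s a b * \<psi> a b)
    = cond_exp s (\<lambda>t. \<psi> (colored_vertex t i) (colored_vertex t j))"
proof -
  let ?L = "colored_link c F s i" and ?R = "colored_link c F s j" and ?W = "facet_wt F w s"
  let ?e = "\<lambda>t a b. if a \<in> t then if b \<in> t then w t * \<psi> a b / ?W else 0 else 0"
  have "(\<Sum>a\<in>?L. \<Sum>b\<in>?R. link_edge_dist F w s a b * \<psi> a b)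
      = (\<Sum>a\<in>?L. \<Sum>b\<in>?R. \<Sum>t\<in>facets_above s. ?e t a b)"
    unfolding link_edge_dist_eq sum_divide_distrib sum_distrib_right by (intro sum.cong refl) auto
  also have "\<dots> = (\<Sum>t\<in>facets_above s. \<Sum>a\<in>?L. \<Sum>b\<in>?R. ?e t a b)"
    by (subst sum.swap) (simp only: sum.swap[of _ ?R])
  also have "\<dots> = (\<Sum>t\<in>facets_above s. w t * \<psi> (colored_vertex t i) (colored_vertex t j) / ?W)"
  proof (rule sum.cong[OF refl])
    fix t
    assume t: "t \<in> facets_above s"
    have "(\<Sum>a\<in>?L. \<Sum>b\<in>?R. ?e t a b)
        = (\<Sum>a\<in>?L. if a \<in> t then \<Sum>b\<in>?R. if b \<in> t then w t * \<psi> a b / ?W else 0 else 0)"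
      by (intro sum.cong) auto
    also have "\<dots> = (\<Sum>b\<in>?R. if b \<in> t then w t * \<psi> (colored_vertex t i) b / ?W else 0)"
      by (rule sum_colored_link_facet[OF t assms(1,3)])
    also have "\<dots> = w t * \<psi> (colored_vertex t i) (colored_vertex t j) / ?W"
      by (rule sum_colored_link_facet[OF t assms(2,4)])
    finally show "(\<Sum>a\<in>?L. \<Sum>b\<in>?R. ?e t a b)
        = w t * \<psi> (colored_vertex t i) (colored_vertex t j) / ?W" .
  qed
  finally show ?thesis
    by (simp add: cond_exp_def sum_divide_distrib)
qed

lemma link_bip_expander_iff_unit_corr_bound:
  assumes "i \<le> d" "j \<le> d" "i \<notin> c ` s" "j \<notin> c ` s"
  shows "link_bip_expander c F w s i j \<mu> \<longleftrightarrow> unit_corr_bound s i j \<mu>"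
proof -
  let ?L = "colored_link c F s i" and ?R = "colored_link c F s j" and ?p = "link_edge_dist F w s"
  have "winner ?R (marg_R ?L ?p) f h = cond_exp s (\<lambda>t. f (colored_vertex t j) * h (colored_vertex t j))"
    for f h
    unfolding winner_marg_R by (rule sum_link_edge_dist[OF assms])
  moreover have "winner ?L (marg_L ?R ?p) g g
      = cond_exp s (\<lambda>t. g (colored_vertex t i) * g (colored_vertex t i))" for g
    unfolding winner_marg_L by (rule sum_link_edge_dist[OF assms])
  moreover have "winner ?L (marg_L ?R ?p) (avg_op ?R ?p f) g
      = cond_exp s (\<lambda>t. g (colored_vertex t i) * f (colored_vertex t j))" for f g
    unfolding winner_avg_op[OF finite_colored_link link_edge_dist_nonneg]
    by (rule sum_link_edge_dist[OF assms])
  ultimately show ?thesis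
    unfolding link_bip_expander_def bip_expander_def unit_corr_bound_def
    by (simp add: power2_eq_square) blast
qed

lemma link_bip_expander_iff_corr_bound:
  assumes "s \<in> faces F" "(i, j) \<in> color_pairs s" "\<mu> \<ge> 0"
  shows "link_bip_expander c F w s i j \<mu> \<longleftrightarrow> corr_bound s i j \<mu>"
proof -
  have "i \<le> d" "j \<le> d" "i \<notin> c ` s" "j \<notin> c ` s"
    using assms(2) by (simp_all add: color_pairs_def)
  from link_bip_expander_iff_unit_corr_bound[OF this] show ?thesis
    using corr_bound_imp_unit_corr_bound[OF assms(1,3)] unit_corr_bound_imp_corr_bound[OF assms(1)]
    by blast
qed

subsection \<open>Connectivity of the two-coloured links\<close>

lemma link_vertex_color:
  assumes "v \<in> link_vertices F s"
  shows "c v \<le> d" "c v \<notin> c ` s"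
proof -
  obtain t where t: "t \<in> F" "insert v s \<subseteq> t" and "v \<notin> s"
    using assms by (auto simp: link_vertices_def faces_def)
  show "c v \<le> d"
    using color_le t by auto
  show "c v \<notin> c ` s"
  proof
    assume "c v \<in> c ` s"
    then obtain x where "x \<in> s" "c x = c v"
      by auto
    then show False
      using inj_on_color[OF t(1)] t(2) \<open>v \<notin> s\<close> by (metis inj_onD insert_subset subsetD)
  qed
qed

lemma link_adj_sym: "link_adj F s a b \<Longrightarrow> link_adj F s b a"
  by (auto simp: link_adj_def insert_commute)

lemma link_adj_link_vertices:
  assumes "link_adj F s a b"
  shows "a \<in> link_vertices F s" "b \<in> link_vertices F s"
  using assms faces_subset[of "insert a (insert b s)" "insert a s"]
    faces_subset[of "insert a (insert b s)" "insert b s"]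
  by (auto simp: link_adj_def link_vertices_def)

lemma link_adj_color_neq:
  assumes "link_adj F s a b"
  shows "c a \<noteq> c b"
proof -
  obtain t where "t \<in> F" "insert a (insert b s) \<subseteq> t"
    using assms by (auto simp: link_adj_def faces_def)
  then show ?thesis
    using assms inj_on_color by (auto simp: link_adj_def dest: inj_onD)
qed

definition colored_adj :: "'v set \<Rightarrow> nat \<Rightarrow> nat \<Rightarrow> 'v \<Rightarrow> 'v \<Rightarrow> bool" where
  "colored_adj s i j a b \<longleftrightarrow> link_adj F s a b \<and> c a \<in> {i, j} \<and> c b \<in> {i, j}"

definition colored_link_connected :: "'v set \<Rightarrow> nat \<Rightarrow> nat \<Rightarrow> bool" where
  "colored_link_connected s i j \<longleftrightarrow> (\<forall>x\<in>link_vertices F s. \<forall>y\<in>link_vertices F s.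
     c x \<in> {i, j} \<longrightarrow> c y \<in> {i, j} \<longrightarrow> (colored_adj s i j)\<^sup>*\<^sup>* x y)"

lemma colored_adj_insert_rtranclp:
  assumes "(colored_adj (insert u s) i j)\<^sup>*\<^sup>* x y" "u \<notin> s"
  shows "(colored_adj s i j)\<^sup>*\<^sup>* x y"
  using assms(1)
proof (rule mono_rtranclp[rule_format, rotated])
  fix a b
  assume "colored_adj (insert u s) i j a b"
  then show "colored_adj s i j a b"
    using assms(2) faces_subset[of "insert a (insert b (insert u s))" "insert a (insert b s)"]
    by (auto simp: colored_adj_def link_adj_def)
qed

lemma colored_link_connected_top:
  assumes "s \<in> faces F" "card s = d - 1" "d \<ge> 1" "(i, j) \<in> color_pairs s" "link_connected F s"
  shows "colored_link_connected s i j"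
proof -
  have "colored_adj s i j a b" if "link_adj F s a b" for a b
    using that missing_color_cases[OF assms(1-4)]
      link_vertex_color[OF link_adj_link_vertices(1)[OF that]]
      link_vertex_color[OF link_adj_link_vertices(2)[OF that]]
    by (auto simp: colored_adj_def)
  then show ?thesis
    using assms(5) unfolding colored_link_connected_def link_connected_def
    by (metis mono_rtranclp)
qed

lemma common_neighbour_of_color:
  assumes "link_adj F s v v'" "i \<le> d" "i \<notin> c ` s" "c v \<noteq> i" "c v' \<noteq> i"
  obtains z where "c z = i" "link_adj F s z v" "link_adj F s z v'"
proof -
  obtain t where t: "t \<in> F" "insert v (insert v' s) \<subseteq> t"
    using assms(1) by (auto simp: link_adj_def faces_def)
  define z where "z = colored_vertex t i"
  have "z \<in> t" "c z = i"
    using colored_vertex[OF t(1) assms(2)] by (simp_all add: z_def)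
  moreover have "z \<notin> s"
    using \<open>c z = i\<close> assms(3) by force
  moreover have "insert z (insert v s) \<in> faces F" "insert z (insert v' s) \<in> faces F"
    using t \<open>z \<in> t\<close> unfolding faces_def by blast+
  ultimately show ?thesis
    using that assms(1,4,5) by (auto simp: link_adj_def)
qed

lemma colored_vertex_near_edge:
  assumes "link_adj F s v v'" "i \<le> d" "i \<notin> c ` s"
  obtains z where "c z \<in> {i, j}" "z = v \<or> link_adj F s z v" "z = v' \<or> link_adj F s z v'"
proof (cases "c v \<in> {i, j} \<or> c v' \<in> {i, j}")
  case True
  then show ?thesis
    using that assms(1) link_adj_sym by blast
next
  case False
  then show ?thesis
    using common_neighbour_of_color[OF assms] that by (metis insertI1)
qed

text \<open>Two \<open>{i, j}\<close>-coloured vertices equal or adjacent to a common vertex \<open>u\<close> are joined through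
  \<open>u\<close> if \<open>u\<close> has colour \<open>i\<close> or \<open>j\<close>, and otherwise inside the link of \<open>u\<close>.\<close>

lemma colored_adj_through_vertex:
  assumes "u \<in> link_vertices F s" "c x \<in> {i, j}" "c y \<in> {i, j}"
    and "x = u \<or> link_adj F s x u" "y = u \<or> link_adj F s y u"
    and "c u \<notin> {i, j} \<Longrightarrow> colored_link_connected (insert u s) i j"
  shows "(colored_adj s i j)\<^sup>*\<^sup>* x y"
proof (cases "c u \<in> {i, j}")
  case True
  then have "(colored_adj s i j)\<^sup>*\<^sup>* x u" "(colored_adj s i j)\<^sup>*\<^sup>* u y"
    using assms(2-5) link_adj_sym by (auto simp: colored_adj_def intro: r_into_rtranclp)
  then show ?thesis
    by (rule rtranclp_trans)
next
  case False
  then have "link_adj F s x u" "link_adj F s y u"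
    using assms(2-5) by auto
  then have "x \<in> link_vertices F (insert u s)" "y \<in> link_vertices F (insert u s)"
    by (auto simp: link_adj_def link_vertices_def)
  then have "(colored_adj (insert u s) i j)\<^sup>*\<^sup>* x y"
    using assms(2,3,6) False unfolding colored_link_connected_def by blast
  then show ?thesis
    using assms(1) colored_adj_insert_rtranclp by (auto simp: link_vertices_def)
qed

lemma colored_walk_near:
  assumes "(link_adj F s)\<^sup>*\<^sup>* x v" "c x \<in> {i, j}" "i \<le> d" "i \<notin> c ` s"
    and links: "\<And>u. u \<in> link_vertices F s \<Longrightarrow> c u \<notin> {i, j} \<Longrightarrow> colored_link_connected (insert u s) i j"
  shows "\<exists>x'. c x' \<in> {i, j} \<and> (colored_adj s i j)\<^sup>*\<^sup>* x x' \<and> (x' = v \<or> link_adj F s x' v)"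
  using assms(1)
proof (induction rule: rtranclp_induct)
  case base
  then show ?case
    using assms(2) by blast
next
  case (step v v')
  then obtain x' where x': "c x' \<in> {i, j}" "(colored_adj s i j)\<^sup>*\<^sup>* x x'" "x' = v \<or> link_adj F s x' v"
    by blast
  obtain z where z: "c z \<in> {i, j}" "z = v \<or> link_adj F s z v" "z = v' \<or> link_adj F s z v'"
    using colored_vertex_near_edge[OF step.hyps(2) assms(3,4)] by blast
  have "(colored_adj s i j)\<^sup>*\<^sup>* x' z"
    using colored_adj_through_vertex[OF link_adj_link_vertices(1)[OF step.hyps(2)] x'(1) z(1) x'(3) z(2)]
      links link_adj_link_vertices(1)[OF step.hyps(2)] by blast
  then show ?case
    using x'(2) z(1,3) rtranclp_trans by metis
qed

lemma colored_link_connected_step: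
  assumes "s \<in> faces F" "link_connected F s" "i \<le> d" "i \<notin> c ` s"
    and links: "\<And>u. u \<in> link_vertices F s \<Longrightarrow> c u \<notin> {i, j} \<Longrightarrow> colored_link_connected (insert u s) i j"
  shows "colored_link_connected s i j"
  unfolding colored_link_connected_def
proof (intro ballI impI)
  fix x y
  assume "x \<in> link_vertices F s" "y \<in> link_vertices F s" "c x \<in> {i, j}" "c y \<in> {i, j}"
  moreover obtain x' where "c x' \<in> {i, j}" "(colored_adj s i j)\<^sup>*\<^sup>* x x'" "x' = y \<or> link_adj F s x' y"
    using colored_walk_near[OF _ _ assms(3,4) links] assms(2) calculation
    unfolding link_connected_def by blast
  ultimately show "(colored_adj s i j)\<^sup>*\<^sup>* x y"
    by (auto simp: colored_adj_def intro: rtranclp.rtrancl_into_rtrancl)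
qed

lemma colored_link_connected:
  assumes conn: "\<forall>s\<in>faces F. card s \<le> d - 1 \<longrightarrow> link_connected F s" and "d \<ge> 1"
  shows "s \<in> faces F \<Longrightarrow> card s \<le> d - 1 \<Longrightarrow> (i, j) \<in> color_pairs s \<Longrightarrow> colored_link_connected s i j"
proof (induction "d - 1 - card s" arbitrary: s rule: less_induct)
  case less
  show ?case
  proof (cases "card s = d - 1")
    case True
    then show ?thesis
      using colored_link_connected_top less.prems conn assms(2) by blast
  next
    case False
    have "colored_link_connected (insert u s) i j"
      if u: "u \<in> link_vertices F s" "c u \<notin> {i, j}" for u
    proof (rule less.hyps)
      have "u \<notin> s" "insert u s \<in> faces F"
        using u by (auto simp: link_vertices_def)
      moreover have "card (insert u s) = Suc (card s)"
        using face_finite_colors(1)[OF less.prems(1)] \<open>u \<notin> s\<close> by simp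
      ultimately show "d - 1 - card (insert u s) < d - 1 - card s" "insert u s \<in> faces F"
        "card (insert u s) \<le> d - 1" "(i, j) \<in> color_pairs (insert u s)"
        using False less.prems u by (auto simp: color_pairs_def)
    qed
    then show ?thesis
      using colored_link_connected_step[OF less.prems(1)] less.prems conn
      by (auto simp: color_pairs_def)
  qed
qed

subsection \<open>A spectral gap from connectivity\<close>

definition dirichlet_form :: "'v set \<Rightarrow> nat \<Rightarrow> nat \<Rightarrow> ('v \<Rightarrow> real) \<Rightarrow> real" where
  "dirichlet_form s i j h = cond_exp s (\<lambda>t. (h (colored_vertex t i) - h (colored_vertex t j))\<^sup>2)"

lemma dirichlet_form_nonneg: "dirichlet_form s i j h \<ge> 0"
  by (simp add: dirichlet_form_def cond_exp_square_nonneg)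

lemma colored_adj_diff_le:
  assumes s: "s \<in> faces F" and "colored_adj s i j a b"
  shows "\<exists>K\<ge>0. \<forall>h. (h a - h b)\<^sup>2 \<le> K * dirichlet_form s i j h"
proof -
  obtain t where t: "t \<in> F" "insert a (insert b s) \<subseteq> t"
    using assms(2) by (auto simp: colored_adj_def link_adj_def faces_def)
  have "t \<in> facets_above s"
    using t by (simp add: facets_above_def)
  have ab: "{c a, c b} = {i, j}"
    using assms(2) link_adj_color_neq[of s a b] by (auto simp: colored_adj_def)
  have edge: "(h a - h b)\<^sup>2 = (h (colored_vertex t i) - h (colored_vertex t j))\<^sup>2" for h :: "'v \<Rightarrow> real"
    using ab colored_vertex_eq[OF t(1)] t(2) by (auto simp: doubleton_eq_iff power2_commute)
  have "w t * (h (colored_vertex t i) - h (colored_vertex t j))\<^sup>2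
      \<le> (\<Sum>u\<in>facets_above s. w u * (h (colored_vertex u i) - h (colored_vertex u j))\<^sup>2)" for h
    using weight_pos \<open>t \<in> facets_above s\<close>
    by (intro member_le_sum[OF _ _ finite_facets_above]) (auto simp: facets_above_def less_imp_le)
  then have "(h a - h b)\<^sup>2 \<le> facet_wt F w s / w t * dirichlet_form s i j h" for h
    using edge facet_wt_pos[OF s] weight_pos[OF t(1)]
    by (simp add: dirichlet_form_def cond_exp_def field_simps)
  then show ?thesis
    using facet_wt_nonneg weight_pos[OF t(1)] by (intro exI[of _ "facet_wt F w s / w t"]) simp
qed

lemma colored_path_diff_le:
  assumes "s \<in> faces F" and "(colored_adj s i j)\<^sup>*\<^sup>* a b"
  shows "\<exists>K\<ge>0. \<forall>h. (h a - h b)\<^sup>2 \<le> K * dirichlet_form s i j h"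
  using assms(2)
proof (induction rule: rtranclp_induct)
  case base
  then show ?case
    by auto
next
  case (step b b')
  obtain K1 where "K1 \<ge> 0" and K1: "\<forall>h. (h a - h b)\<^sup>2 \<le> K1 * dirichlet_form s i j h"
    using step.IH by blast
  obtain K2 where "K2 \<ge> 0" and K2: "\<forall>h. (h b - h b')\<^sup>2 \<le> K2 * dirichlet_form s i j h"
    using colored_adj_diff_le[OF assms(1) step.hyps(2)] by blast
  have "(h a - h b')\<^sup>2 \<le> (2 * K1 + 2 * K2) * dirichlet_form s i j h" for h
  proof -
    have "(h a - h b')\<^sup>2 \<le> 2 * (K1 * dirichlet_form s i j h) + 2 * (K2 * dirichlet_form s i j h)"
      using square_diff_le_twice[of "h a" "h b'" "h b"] K1[rule_format, of h] K2[rule_format, of h]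
      by linarith
    then show ?thesis
      by (simp add: algebra_simps)
  qed
  then show ?case
    using \<open>K1 \<ge> 0\<close> \<open>K2 \<ge> 0\<close> by (intro exI[of _ "2 * K1 + 2 * K2"]) simp
qed

lemma colored_link_diff_le:
  assumes "s \<in> faces F" "colored_link_connected s i j"
  obtains K where "K \<ge> 1" and "\<And>b b' h. b \<in> colored_link c F s j \<Longrightarrow> b' \<in> colored_link c F s j
    \<Longrightarrow> (h b - h b')\<^sup>2 \<le> K * dirichlet_form s i j h"
proof -
  let ?R = "colored_link c F s j"
  have "\<forall>p\<in>?R \<times> ?R. \<exists>K\<ge>0. \<forall>h. (h (fst p) - h (snd p))\<^sup>2 \<le> K * dirichlet_form s i j h"
    using assms colored_path_diff_le
    by (auto simp: colored_link_connected_def colored_link_def)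
  then obtain K where K: "\<And>p. p \<in> ?R \<times> ?R \<Longrightarrow>
      K p \<ge> 0 \<and> (\<forall>h. (h (fst p) - h (snd p))\<^sup>2 \<le> K p * dirichlet_form s i j h)"
    by metis
  have fin: "finite (?R \<times> ?R)"
    using finite_colored_link by simp
  show ?thesis
  proof (rule that[of "1 + sum K (?R \<times> ?R)"])
    show "1 + sum K (?R \<times> ?R) \<ge> 1"
      using K by (simp add: sum_nonneg)
    fix b b' h
    assume "b \<in> ?R" "b' \<in> ?R"
    then have "(h b - h b')\<^sup>2 \<le> K (b, b') * dirichlet_form s i j h"
      and "K (b, b') \<le> 1 + sum K (?R \<times> ?R)"
      using K member_le_sum[OF _ _ fin, of "(b, b')" K] by force+
    then show "(h b - h b')\<^sup>2 \<le> (1 + sum K (?R \<times> ?R)) * dirichlet_form s i j h"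
      using dirichlet_form_nonneg by (meson mult_right_mono order_trans)
  qed
qed

lemma unit_centered_spread:
  assumes s: "s \<in> faces F"
    and f0: "cond_exp s (\<lambda>t. f (colored_vertex t j)) = 0"
    and f1: "cond_exp s (\<lambda>t. (f (colored_vertex t j))\<^sup>2) = 1"
  obtains t1 t2 where "t1 \<in> facets_above s" "t2 \<in> facets_above s"
    and "1 \<le> (f (colored_vertex t1 j) - f (colored_vertex t2 j))\<^sup>2"
proof -
  obtain t1 where t1: "t1 \<in> facets_above s" "1 \<le> (f (colored_vertex t1 j))\<^sup>2"
    using cond_exp_strict_mono[OF s, of "\<lambda>t. (f (colored_vertex t j))\<^sup>2" "\<lambda>_. 1"]
      f1 cond_exp_const[OF s] by force
  define x where "x = f (colored_vertex t1 j)"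
  obtain t2 where t2: "t2 \<in> facets_above s" "x * f (colored_vertex t2 j) \<le> 0"
    using cond_exp_strict_mono[OF s, of "\<lambda>_. 0" "\<lambda>t. x * f (colored_vertex t j)"]
      f0 cond_exp_const[OF s] cond_exp_cmult by force
  have "(x - f (colored_vertex t2 j))\<^sup>2 = x\<^sup>2 - 2 * (x * f (colored_vertex t2 j)) + (f (colored_vertex t2 j))\<^sup>2"
    by (simp add: power2_eq_square algebra_simps)
  moreover have "1 \<le> x\<^sup>2" "0 \<le> (f (colored_vertex t2 j))\<^sup>2"
    using t1(2) by (simp_all add: x_def)
  ultimately have "1 \<le> (x - f (colored_vertex t2 j))\<^sup>2"
    using t2(2) by linarith
  then show ?thesis
    using that t1(1) t2(1) unfolding x_def by blast
qed

lemma dirichlet_form_glued: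
  assumes "i \<le> d" "j \<le> d" "i \<noteq> j"
  shows "dirichlet_form s i j (\<lambda>v. if c v = i then g v else f v)
    = cond_exp s (\<lambda>t. (g (colored_vertex t i))\<^sup>2) + cond_exp s (\<lambda>t. (f (colored_vertex t j))\<^sup>2)
      - 2 * cond_exp s (\<lambda>t. g (colored_vertex t i) * f (colored_vertex t j))"
proof -
  have "dirichlet_form s i j (\<lambda>v. if c v = i then g v else f v)
      = cond_exp s (\<lambda>t. (g (colored_vertex t i))\<^sup>2 + (f (colored_vertex t j))\<^sup>2
          - 2 * (g (colored_vertex t i) * f (colored_vertex t j)))"
    unfolding dirichlet_form_def using colored_vertex_above(2) assms
    by (intro cond_exp_cong) (simp add: power2_eq_square algebra_simps)
  then show ?thesis
    by (simp only: cond_exp_diff cond_exp_add cond_exp_cmult)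
qed

text \<open>A centred unit \<open>f\<close> differs by at least \<open>1\<close> at two colour-\<open>j\<close> vertices of the link. These
  are joined by a two-coloured path, so the Dirichlet form \<open>2 - 2 E\<^sub>s[g(t\<^sub>i) f(t\<^sub>j)]\<close> of
  \<open>g\<close> and \<open>f\<close> glued together is at least \<open>1 / K\<close>.\<close>

lemma spectral_gap:
  assumes s: "s \<in> faces F" and ij: "(i, j) \<in> color_pairs s" and "colored_link_connected s i j"
  obtains \<mu> where "0 \<le> \<mu>" "\<mu> < 1" "corr_bound s i j \<mu>"
proof -
  obtain K where "K \<ge> 1" and K: "\<And>b b' h. b \<in> colored_link c F s j \<Longrightarrow> b' \<in> colored_link c F s j
      \<Longrightarrow> (h b - h b')\<^sup>2 \<le> K * dirichlet_form s i j h"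
    using colored_link_diff_le[OF s assms(3)] by blast
  have "unit_corr_bound s i j (1 - 1 / (2 * K))"
    unfolding unit_corr_bound_def
  proof (intro allI impI)
    fix f g
    assume f0: "cond_exp s (\<lambda>t. f (colored_vertex t j)) = 0"
      and f1: "cond_exp s (\<lambda>t. (f (colored_vertex t j))\<^sup>2) = 1"
      and g1: "cond_exp s (\<lambda>t. (g (colored_vertex t i))\<^sup>2) = 1"
    obtain t1 t2 where t12: "t1 \<in> facets_above s" "t2 \<in> facets_above s"
      and spread: "1 \<le> (f (colored_vertex t1 j) - f (colored_vertex t2 j))\<^sup>2"
      using unit_centered_spread[OF s f0 f1] by blast
    define h where "h = (\<lambda>v. if c v = i then g v else f v)"
    have "1 \<le> (h (colored_vertex t1 j) - h (colored_vertex t2 j))\<^sup>2"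
      using spread colored_vertex_above(2)[OF t12(1)] colored_vertex_above(2)[OF t12(2)] ij
      by (simp add: h_def color_pairs_def)
    also have "\<dots> \<le> K * dirichlet_form s i j h"
      using K colored_vertex_in_colored_link t12 ij by (simp add: color_pairs_def)
    also have "\<dots> = K * (2 - 2 * cond_exp s (\<lambda>t. g (colored_vertex t i) * f (colored_vertex t j)))"
      using dirichlet_form_glued[of i j s g f] f1 g1 ij by (simp add: h_def color_pairs_def)
    finally show "cond_exp s (\<lambda>t. g (colored_vertex t i) * f (colored_vertex t j)) \<le> 1 - 1 / (2 * K)"
      using \<open>K \<ge> 1\<close> by (simp add: field_simps)
  qed
  moreover have "0 \<le> 1 - 1 / (2 * K)" "1 - 1 / (2 * K) < 1"
    using \<open>K \<ge> 1\<close> by (simp_all add: field_simps)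
  ultimately show ?thesis
    using that unit_corr_bound_imp_corr_bound[OF s] by blast
qed

subsection \<open>The best constant common to all colour pairs\<close>

definition uniform_corr_bound :: "'v set \<Rightarrow> real \<Rightarrow> bool" where
  "uniform_corr_bound s \<mu> \<longleftrightarrow> (\<forall>(i, j)\<in>color_pairs s. corr_bound s i j \<mu>)"

definition opt_corr_bound :: "'v set \<Rightarrow> real" where
  "opt_corr_bound s = Inf {\<mu>. 0 \<le> \<mu> \<and> uniform_corr_bound s \<mu>}"

lemma uniform_corr_boundD:
  "uniform_corr_bound s \<mu> \<Longrightarrow> (i, j) \<in> color_pairs s \<Longrightarrow> corr_bound s i j \<mu>"
  by (auto simp: uniform_corr_bound_def)

lemma uniform_corr_boundI:
  "(\<And>i j. (i, j) \<in> color_pairs s \<Longrightarrow> corr_bound s i j \<mu>) \<Longrightarrow> uniform_corr_bound s \<mu>"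
  by (auto simp: uniform_corr_bound_def)

lemma uniform_corr_bound_mono:
  "uniform_corr_bound s \<mu> \<Longrightarrow> \<mu> \<le> \<mu>' \<Longrightarrow> uniform_corr_bound s \<mu>'"
  using corr_bound_mono by (auto simp: uniform_corr_bound_def)

lemma opt_corr_bound:
  assumes "0 \<le> \<mu>" "uniform_corr_bound s \<mu>"
  shows "0 \<le> opt_corr_bound s" "opt_corr_bound s \<le> \<mu>" "uniform_corr_bound s (opt_corr_bound s)"
proof -
  let ?S = "{\<mu>. 0 \<le> \<mu> \<and> uniform_corr_bound s \<mu>}"
  have S: "\<mu> \<in> ?S"
    using assms by simp
  then show "0 \<le> opt_corr_bound s"
    unfolding opt_corr_bound_def by (intro cInf_greatest) auto
  show "opt_corr_bound s \<le> \<mu>"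
    unfolding opt_corr_bound_def by (rule cInf_lower[OF S]) (auto intro: bdd_belowI)
  show "uniform_corr_bound s (opt_corr_bound s)"
    unfolding opt_corr_bound_def using S
    by (auto intro!: corr_bound_Inf simp: uniform_corr_bound_def)
qed

lemma uniform_corr_bound_lt_1:
  assumes s: "s \<in> faces F"
    and conn: "\<And>i j. (i, j) \<in> color_pairs s \<Longrightarrow> colored_link_connected s i j"
  obtains \<mu> where "0 \<le> \<mu>" "\<mu> < 1" "uniform_corr_bound s \<mu>"
proof -
  have "\<exists>\<mu>. 0 \<le> \<mu> \<and> \<mu> < 1 \<and> corr_bound s (fst p) (snd p) \<mu>" if p: "p \<in> color_pairs s" for p
  proof -
    obtain i j where "p = (i, j)"
      by force
    moreover obtain \<mu> where "0 \<le> \<mu>" "\<mu> < 1" "corr_bound s i j \<mu>"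
      using spectral_gap[OF s] conn p \<open>p = (i, j)\<close> by blast
    ultimately show ?thesis
      by auto
  qed
  then obtain M where M: "\<And>p. p \<in> color_pairs s \<Longrightarrow>
      0 \<le> M p \<and> M p < 1 \<and> corr_bound s (fst p) (snd p) (M p)"
    by metis
  define \<mu> where "\<mu> = Max (insert 0 (M ` color_pairs s))"
  have fin: "finite (insert 0 (M ` color_pairs s))"
    using finite_color_pairs by simp
  have "\<mu> \<in> insert 0 (M ` color_pairs s)"
    unfolding \<mu>_def using fin by (intro Max_in) auto
  then have "\<mu> < 1"
    using M by auto
  moreover have "0 \<le> \<mu>"
    unfolding \<mu>_def using fin by (intro Max_ge) auto
  moreover have "uniform_corr_bound s \<mu>"
  proof (rule uniform_corr_boundI)
    fix i j
    assume ij: "(i, j) \<in> color_pairs s"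
    then show "corr_bound s i j \<mu>"
      using M[OF ij] Max_ge[OF fin, of "M (i, j)"] corr_bound_mono by (auto simp: \<mu>_def)
  qed
  ultimately show ?thesis
    using that by blast
qed

lemma color_pairs_insert_colored_vertex:
  assumes "t \<in> facets_above s" "m \<le> d" "(i, j) \<in> color_pairs s" "m \<noteq> i" "m \<noteq> j"
  shows "(i, j) \<in> color_pairs (insert (colored_vertex t m) s)"
  using assms colored_vertex_above(2)[OF assms(1,2)] by (auto simp: color_pairs_def)

lemma uniform_corr_bound_trickle_down:
  assumes s: "s \<in> faces F" and "card s < d - 1" and "0 \<le> \<gamma>" "\<gamma> \<le> 1" "0 \<le> L"
    and "uniform_corr_bound s L"
    and links: "\<And>t m. t \<in> facets_above s \<Longrightarrow> m \<le> d \<Longrightarrow> m \<notin> c ` s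
      \<Longrightarrow> uniform_corr_bound (insert (colored_vertex t m) s) \<gamma>"
  shows "uniform_corr_bound s (\<gamma> + (1 - \<gamma>) * L\<^sup>2)"
  unfolding uniform_corr_bound_def
proof (intro ballI, clarify)
  fix i j
  assume ij: "(i, j) \<in> color_pairs s"
  obtain m where m: "m \<le> d" "m \<notin> c ` s" "m \<noteq> i" "m \<noteq> j"
    using exists_third_color[OF s assms(2)] by blast
  have "(m, j) \<in> color_pairs s" "(m, i) \<in> color_pairs s"
    using m ij by (auto simp: color_pairs_def)
  then have "corr_bound s m j L" "corr_bound s m i L"
    using uniform_corr_boundD[OF assms(6)] by blast+
  moreover have "\<forall>t\<in>facets_above s. corr_bound (insert (colored_vertex t m) s) i j \<gamma>"
    using uniform_corr_boundD[OF links] m color_pairs_insert_colored_vertex[OF _ m(1) ij m(3,4)]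
    by blast
  ultimately show "corr_bound s i j (\<gamma> + (1 - \<gamma>) * L\<^sup>2)"
    using corr_bound_trickle_down[OF s m(1) assms(3-5)] by blast
qed

lemma uniform_corr_bound_top:
  assumes s: "s \<in> faces F" and "card s = d - 1" "d \<ge> 2" "0 < lam"
    and top: "\<forall>s\<in>faces F. card s = d - 1 \<longrightarrow>
           (\<forall>i j. i \<le> d \<and> j \<le> d \<and> i \<notin> c ` s \<and> j \<notin> c ` s \<and> i \<noteq> j \<longrightarrow>
              link_bip_expander c F w s i j (lam / ((real d - 1) * lam + 1)))"
  shows "uniform_corr_bound s (lam / (real (card s) * lam + 1))"
proof (rule uniform_corr_boundI)
  fix i j
  assume ij: "(i, j) \<in> color_pairs s"
  then have "i \<le> d \<and> j \<le> d \<and> i \<notin> c ` s \<and> j \<notin> c ` s \<and> i \<noteq> j"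
    by (simp add: color_pairs_def)
  moreover have "real d - 1 = real (card s)"
    using assms(2,3) by (simp add: of_nat_diff)
  ultimately have "link_bip_expander c F w s i j (lam / (real (card s) * lam + 1))"
    using top s assms(2) by auto
  moreover have "0 \<le> lam / (real (card s) * lam + 1)"
    using assms(4) by simp
  ultimately show "corr_bound s i j (lam / (real (card s) * lam + 1))"
    using link_bip_expander_iff_corr_bound[OF s ij] by blast
qed

lemma uniform_corr_bound_step:
  assumes s: "s \<in> faces F" and card: "card s < d - 1" and lam: "0 < lam"
    and conn: "\<And>i j. (i, j) \<in> color_pairs s \<Longrightarrow> colored_link_connected s i j"
    and links: "\<And>t m. t \<in> facets_above s \<Longrightarrow> m \<le> d \<Longrightarrow> m \<notin> c ` s
      \<Longrightarrow> uniform_corr_bound (insert (colored_vertex t m) s) (lam / (real (Suc (card s)) * lam + 1))"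
  shows "uniform_corr_bound s (lam / (real (card s) * lam + 1))"
proof -
  let ?\<gamma> = "lam / (real (Suc (card s)) * lam + 1)" and ?L = "opt_corr_bound s"
  note \<gamma> = trickle_constant_bounds[OF lam, of "card s"]
  obtain \<mu> where "0 \<le> \<mu>" "\<mu> < 1" "uniform_corr_bound s \<mu>"
    using uniform_corr_bound_lt_1[OF s conn] by blast
  note L = opt_corr_bound[OF this(1,3)]
  have "uniform_corr_bound s (?\<gamma> + (1 - ?\<gamma>) * ?L\<^sup>2)"
    by (rule uniform_corr_bound_trickle_down[OF s card \<gamma> L(1,3) links])
  then have "?L \<le> ?\<gamma> + (1 - ?\<gamma>) * ?L\<^sup>2"
    using \<gamma> by (intro opt_corr_bound(2)) simp_all
  then have "(1 - ?\<gamma>) * ?L \<le> ?\<gamma>"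
    using L(2) \<open>\<mu> < 1\<close> by (intro le_quadratic_fixed_point) simp_all
  then have "?L \<le> lam / (real (card s) * lam + 1)"
    by (rule trickle_constant_step[OF lam])
  then show ?thesis
    using L(3) uniform_corr_bound_mono by blast
qed

lemma uniform_corr_bound_faces:
  assumes d: "d \<ge> 2" and lam: "0 < lam"
    and conn: "\<forall>s\<in>faces F. card s \<le> d - 1 \<longrightarrow> link_connected F s"
    and top: "\<forall>s\<in>faces F. card s = d - 1 \<longrightarrow>
           (\<forall>i j. i \<le> d \<and> j \<le> d \<and> i \<notin> c ` s \<and> j \<notin> c ` s \<and> i \<noteq> j \<longrightarrow>
              link_bip_expander c F w s i j (lam / ((real d - 1) * lam + 1)))"
  shows "s \<in> faces F \<Longrightarrow> card s \<le> d - 1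
    \<Longrightarrow> uniform_corr_bound s (lam / (real (card s) * lam + 1))"
proof (induction "d - 1 - card s" arbitrary: s rule: less_induct)
  case less
  show ?case
  proof (cases "card s = d - 1")
    case True
    then show ?thesis
      using uniform_corr_bound_top[OF less.prems(1) _ d lam top] by blast
  next
    case False
    then have card: "card s < d - 1"
      using less.prems(2) by simp
    have "uniform_corr_bound (insert (colored_vertex t m) s) (lam / (real (Suc (card s)) * lam + 1))"
      if "t \<in> facets_above s" "m \<le> d" "m \<notin> c ` s" for t m
      using less.hyps[of "insert (colored_vertex t m) s"] card
        card_insert_colored_vertex[OF less.prems(1) that] insert_colored_vertex_face[OF that(1,2)]
      by simp
    moreover have "colored_link_connected s i j" if "(i, j) \<in> color_pairs s" for i j
      using colored_link_connected[OF conn _ less.prems that] d by simp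
    ultimately show ?thesis
      using uniform_corr_bound_step[OF less.prems(1) card lam] by blast
  qed
qed

end

theorem corollary7p5:
  fixes d :: nat and lam :: real and F :: "'v set set" and w :: "'v set \<Rightarrow> real"
    and c :: "'v \<Rightarrow> nat"
  assumes "d \<ge> 2" and "0 < lam" and "lam < 1/2"
    and "wcomplex d F w" and "partite d F c"
    and "\<forall>s\<in>faces F. card s \<le> d - 1 \<longrightarrow> link_connected F s"
    and "\<forall>s\<in>faces F. card s = d - 1 \<longrightarrow>
           (\<forall>i j. i \<le> d \<and> j \<le> d \<and> i \<notin> c ` s \<and> j \<notin> c ` s \<and> i \<noteq> j \<longrightarrow>
              link_bip_expander c F w s i j (lam / ((real d - 1) * lam + 1)))"
  shows "\<forall>s\<in>faces F. \<forall>i j. i \<le> d \<and> j \<le> d \<and> i \<notin> c ` s \<and> j \<notin> c ` s \<and> i \<noteq> j \<longrightarrow>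
           link_bip_expander c F w s i j lam"
proof (intro ballI allI impI)
  interpret partite_complex d F w c
    using assms(4,5) by unfold_locales
  fix s i j
  assume s: "s \<in> faces F" and "i \<le> d \<and> j \<le> d \<and> i \<notin> c ` s \<and> j \<notin> c ` s \<and> i \<noteq> j"
  then have ij: "(i, j) \<in> color_pairs s"
    by (simp add: color_pairs_def)
  have "lam / (real (card s) * lam + 1) \<le> lam"
    using assms(2) by (simp add: divide_le_eq add_pos_nonneg)
  then have "uniform_corr_bound s lam"
    using uniform_corr_bound_faces[OF assms(1,2,6,7) s color_pair_card_le[OF s ij]]
      uniform_corr_bound_mono by blast
  then have "corr_bound s i j lam"
    by (rule uniform_corr_boundD[OF _ ij])
  then show "link_bip_expander c F w s i j lam"
    using link_bip_expander_iff_corr_bound[OF s ij] assms(2) by simp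
qed

end
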